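(* Let $G=(V,E)$, $k\ge 3$, the choice strings $c_{i,j}$ ($1\le i<j\le k$), $L=k+1$ and $d=k-2$ be as in the construction described in the context. If $G$ has a clique of size $k$, then there is a string $s$ of length $L$ such that every choice string $c_{i,j}$ has a substring $s_{i,j}$ of length $L$ with $d_H(s,s_{i,j})\le d$.
   Context: Let $G=(V,E)$ be an undirected simple graph with $V=\{v_1,\dots,v_n\}$ and edge set $E=\{e_1,\dots,e_m\}$, and let $k\ge 3$ be an integer; put $N=\binom{k}{2}$. The alphabet consists of pairwise distinct symbols: encoding symbols $\sigma_1,\dots,\sigma_n$, string identification symbols $\varphi_1,\dots,\varphi_N$, and a synchronizing symbol $\#$. Order the pairs $(i,j)$ with $1\le i<j\le k$ lexicographically, $(1,2),(1,3),\dots,(1,k),(2,3),\dots,(k-1,k)$, and let $i'$ denote the position of $(i,j)$ in this order. For an edge $e$ joining $v_r$ and $v_s$ with $r<s$ define $\mathrm{block}(i,j,e)=\varphi_{i'}^{\,i-1}\,\sigma_r\,\varphi_{i'}^{\,j-i-1}\,\sigma_s\,\varphi_{i'}^{\,k-j}\,\#$ (a string of length $k+1$), and the choice string $c_{i,j}=\mathrm{block}(i,j,e_1)\,\varphi_{i'}^{\,k}\,\mathrm{block}(i,j,e_2)\,\varphi_{i'}^{\,k}\cdots\varphi_{i'}^{\,k}\,\mathrm{block}(i,j,e_m)$. Set $L=k+1$ and $d=k-2$. $d_H$ denotes Hamming distance. *)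

theory Defs
  imports Main
begin

text \<open>Alphabet: encoding symbols sigma_r (vertex v_r), string identification
symbols phi_p (p-th pair), and the synchronizing symbol #.\<close>
datatype sym = Sig nat | Phi nat | Hash

text \<open>Position (1-based) of the pair (i,j) in the lexicographic order of
{(a,b). 1 <= a < b <= k}.\<close>
definition pair_pos :: "nat \<Rightarrow> nat \<Rightarrow> nat \<Rightarrow> nat" where
  "pair_pos k i j = card {(a, b). 1 \<le> a \<and> a < b \<and> b \<le> k \<and> (a < i \<or> (a = i \<and> b \<le> j))}"

definition block :: "nat \<Rightarrow> nat \<Rightarrow> nat \<Rightarrow> nat \<times> nat \<Rightarrow> sym list" where
  "block k i j e = (let p = pair_pos k i j in
     replicate (i - 1) (Phi p) @ [Sig (fst e)] @ replicate (j - i - 1) (Phi p)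
     @ [Sig (snd e)] @ replicate (k - j) (Phi p) @ [Hash])"

definition choice_str :: "nat \<Rightarrow> (nat \<times> nat) list \<Rightarrow> nat \<Rightarrow> nat \<Rightarrow> sym list" where
  "choice_str k es i j = (case map (block k i j) es of
      [] \<Rightarrow> []
    | b # bs \<Rightarrow> b @ concat (map (\<lambda>x. replicate k (Phi (pair_pos k i j)) @ x) bs))"

definition hamming :: "'a list \<Rightarrow> 'a list \<Rightarrow> nat" where
  "hamming s t = card {q. q < length s \<and> s ! q \<noteq> t ! q}"

definition is_substring :: "'a list \<Rightarrow> 'a list \<Rightarrow> bool" where
  "is_substring t c \<longleftrightarrow> (\<exists>u w. c = u @ t @ w)"

definition simple_graph :: "nat \<Rightarrow> (nat \<times> nat) list \<Rightarrow> bool" where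
  "simple_graph n es \<longleftrightarrow> distinct es \<and> (\<forall>(r, s) \<in> set es. 1 \<le> r \<and> r < s \<and> s \<le> n)"

definition has_clique :: "nat \<Rightarrow> (nat \<times> nat) list \<Rightarrow> nat \<Rightarrow> bool" where
  "has_clique n es k \<longleftrightarrow> (\<exists>K. K \<subseteq> {1..n} \<and> card K = k \<and>
      (\<forall>u\<in>K. \<forall>v\<in>K. u < v \<longrightarrow> (u, v) \<in> set es))"

end

theory Submission
  imports Defs
begin

text \<open>Let the clique consist of the vertices \<open>v(c\<^sub>1), ..., v(c\<^sub>k)\<close> with
  \<open>c\<^sub>1 < ... < c\<^sub>k\<close>, and take \<open>s = \<sigma>(c\<^sub>1) ... \<sigma>(c\<^sub>k) #\<close>. For \<open>i < j\<close> the pair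
  \<open>(v(c\<^sub>i), v(c\<^sub>j))\<close> is an edge, and its block in the choice string of \<open>(i, j)\<close> agrees
  with \<open>s\<close> at the positions of \<open>\<sigma>(c\<^sub>i)\<close>, \<open>\<sigma>(c\<^sub>j)\<close> and \<open>#\<close>, so it differs from \<open>s\<close> in
  at most \<open>(k + 1) - 3 = k - 2\<close> positions.\<close>

lemma length_block:
  assumes "1 \<le> i" "i < j" "j \<le> k"
  shows "length (block k i j e) = k + 1"
  using assms by (simp add: block_def Let_def)

lemma nth_block:
  assumes "1 \<le> i" "i < j" "j \<le> k"
  shows "block k i j e ! (i - 1) = Sig (fst e)"
    and "block k i j e ! (j - 1) = Sig (snd e)"
    and "block k i j e ! k = Hash"
  using assms by (auto simp add: block_def Let_def nth_append)

lemma is_substring_block_choice_str: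
  assumes "e \<in> set es"
  shows "is_substring (block k i j e) (choice_str k es i j)"
proof -
  define sep where "sep = replicate k (Phi (pair_pos k i j))"
  obtain b bs where es: "map (block k i j) es = b # bs"
    using assms by (cases es) auto
  then have "block k i j e = b \<or> block k i j e \<in> set bs"
    using assms by (metis image_eqI list.set_map set_ConsD)
  then show ?thesis
  proof
    assume "block k i j e = b"
    then show ?thesis
      unfolding is_substring_def choice_str_def es by (metis append_Nil list.case(2))
  next
    assume "block k i j e \<in> set bs"
    then obtain ys zs where "bs = ys @ block k i j e # zs"
      by (meson split_list)
    then have "choice_str k es i j =
        (b @ concat (map (\<lambda>x. sep @ x) ys) @ sep) @ block k i j e @ concat (map (\<lambda>x. sep @ x) zs)"
      by (simp add: choice_str_def es sep_def)
    then show ?thesis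
      unfolding is_substring_def by blast
  qed
qed

lemma hamming_le_diff_card_agree:
  assumes "A \<subseteq> {..<length s}" and "\<forall>q\<in>A. s ! q = t ! q"
  shows "hamming s t \<le> length s - card A"
proof -
  have "{q. q < length s \<and> s ! q \<noteq> t ! q} \<subseteq> {..<length s} - A"
    using assms(2) by auto
  then have "hamming s t \<le> card ({..<length s} - A)"
    unfolding hamming_def by (intro card_mono) auto
  also have "\<dots> = length s - card A"
    using assms(1) by (simp add: card_Diff_subset finite_subset)
  finally show ?thesis .
qed

lemma has_clique_sorted_list:
  assumes "has_clique n es k"
  obtains cs where "length cs = k"
    and "\<And>a b. a < b \<Longrightarrow> b < k \<Longrightarrow> (cs ! a, cs ! b) \<in> set es"
proof -
  obtain K where K: "K \<subseteq> {1..n}" "card K = k"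
    and edges: "\<forall>u\<in>K. \<forall>v\<in>K. u < v \<longrightarrow> (u, v) \<in> set es"
    using assms unfolding has_clique_def by blast
  have "finite K"
    using K(1) finite_subset by blast
  let ?cs = "sorted_list_of_set K"
  have "length ?cs = k"
    using \<open>finite K\<close> K(2) by simp
  moreover have "(?cs ! a, ?cs ! b) \<in> set es" if "a < b" "b < k" for a b
    using that \<open>finite K\<close> K(2) edges sorted_wrt_nth_less[OF strict_sorted_list_of_set]
    by (metis length_sorted_list_of_set nth_mem order.strict_trans set_sorted_list_of_set)
  ultimately show ?thesis
    using that by blast
qed

lemma hamming_clique_string_block:
  assumes "length cs = k" "1 \<le> i" "i < j" "j \<le> k"
  shows "hamming (map Sig cs @ [Hash]) (block k i j (cs ! (i - 1), cs ! (j - 1))) \<le> k - 2"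
proof -
  let ?s = "map Sig cs @ [Hash]" and ?agree = "{i - 1, j - 1, k}"
  have "\<forall>q\<in>?agree. ?s ! q = block k i j (cs ! (i - 1), cs ! (j - 1)) ! q"
    using assms nth_block[OF assms(2-4)] by (auto simp: nth_append)
  moreover have "?agree \<subseteq> {..<length ?s}"
    using assms by auto
  moreover have "card ?agree = 3"
    using assms by (auto simp add: card_insert_if)
  ultimately show ?thesis
    using hamming_le_diff_card_agree[of ?agree ?s] assms(1) by simp
qed

theorem proposition1:
  fixes n k :: nat and es :: "(nat \<times> nat) list"
  assumes "k \<ge> 3"
    and "simple_graph n es"
    and "has_clique n es k"
  shows "\<exists>s :: sym list. length s = k + 1 \<and>
           (\<forall>i j. 1 \<le> i \<and> i < j \<and> j \<le> k \<longrightarrow>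
              (\<exists>t. length t = k + 1 \<and> is_substring t (choice_str k es i j)
                   \<and> hamming s t \<le> k - 2))"
proof -
  obtain cs where len: "length cs = k"
    and edge: "\<And>a b. a < b \<Longrightarrow> b < k \<Longrightarrow> (cs ! a, cs ! b) \<in> set es"
    using has_clique_sorted_list[OF assms(3)] by blast
  have "\<exists>t. length t = k + 1 \<and> is_substring t (choice_str k es i j)
            \<and> hamming (map Sig cs @ [Hash]) t \<le> k - 2"
    if ij: "1 \<le> i" "i < j" "j \<le> k" for i j
  proof (intro exI conjI)
    let ?e = "(cs ! (i - 1), cs ! (j - 1))"
    show "length (block k i j ?e) = k + 1"
      using length_block[OF ij] .
    show "is_substring (block k i j ?e) (choice_str k es i j)"
      using ij by (intro is_substring_block_choice_str edge) auto
    show "hamming (map Sig cs @ [Hash]) (block k i j ?e) \<le> k - 2"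
      using hamming_clique_string_block[OF len ij] .
  qed
  then show ?thesis
    using len by (intro exI[of _ "map Sig cs @ [Hash]"]) auto
qed

end
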